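(* Let $\Bbbk$ be a field. If $G$ is a graph with no induced $2K_2$ that is prime over $\Bbbk$, then $\operatorname{reg}_{\Bbbk}(G)\le\frac{\delta(G)+3}{2}$, where $\delta(G)$ is the minimum degree.
   Context: $2K_2$ is the disjoint union of two edges. $\operatorname{reg}_{\Bbbk}(G)=\max\{j\ge0:\widetilde H_{j-1}(\operatorname{Ind}(G[S]);\Bbbk)\neq0\text{ for some }S\subseteq V(G)\}$, $\operatorname{Ind}$ the independence complex. A connected graph $G$ is prime over $\Bbbk$ if $\operatorname{reg}_{\Bbbk}(G-x)<\operatorname{reg}_{\Bbbk}(G)$ for every vertex $x$. *)

theory Defs
  imports Complex_Main
begin

text \<open>A simplicial complex is given as a set of finite faces K :: 'a set set (including the empty face).\<close>

definition is_chain :: "'a set set \<Rightarrow> int \<Rightarrow> ('a set \<Rightarrow> 'k::field) \<Rightarrow> bool" where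
  "is_chain K d c \<longleftrightarrow> (\<forall>\<sigma>. c \<sigma> \<noteq> 0 \<longrightarrow> \<sigma> \<in> K \<and> finite \<sigma> \<and> int (card \<sigma>) = d + 1)"

text \<open>Simplicial boundary (augmented, so the empty face is the (-1)-face):
  (bd c)(tau) = sum over v not in tau of (-1)^(number of elements of tau below v) * c(tau + v).\<close>
definition bd :: "'a::linorder set set \<Rightarrow> ('a set \<Rightarrow> 'k::field) \<Rightarrow> 'a set \<Rightarrow> 'k" where
  "bd K c \<tau> = (\<Sum>v \<in> {v. v \<notin> \<tau> \<and> insert v \<tau> \<in> K}. (-1) ^ card {u \<in> \<tau>. u < v} * c (insert v \<tau>))"

definition red_hom_nonzero :: "'k::field itself \<Rightarrow> 'a::linorder set set \<Rightarrow> int \<Rightarrow> bool" where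
  "red_hom_nonzero TYPE('k) K d \<longleftrightarrow>
     (\<exists>z :: 'a set \<Rightarrow> 'k. is_chain K d z \<and> bd K z = (\<lambda>_. 0) \<and>
        \<not> (\<exists>b :: 'a set \<Rightarrow> 'k. is_chain K (d + 1) b \<and> bd K b = z))"

definition ind_complex :: "'a set \<Rightarrow> ('a \<Rightarrow> 'a \<Rightarrow> bool) \<Rightarrow> 'a set set" where
  "ind_complex S E = {\<sigma>. \<sigma> \<subseteq> S \<and> (\<forall>u\<in>\<sigma>. \<forall>v\<in>\<sigma>. \<not> E u v)}"

definition reg :: "'k::field itself \<Rightarrow> 'a::linorder set \<Rightarrow> ('a \<Rightarrow> 'a \<Rightarrow> bool) \<Rightarrow> nat" where
  "reg TYPE('k) V E = Max {j::nat. \<exists>S \<subseteq> V. red_hom_nonzero TYPE('k) (ind_complex S E) (int j - 1)}"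

definition connected_graph :: "'a set \<Rightarrow> ('a \<Rightarrow> 'a \<Rightarrow> bool) \<Rightarrow> bool" where
  "connected_graph V E \<longleftrightarrow> V \<noteq> {} \<and>
     (\<forall>u\<in>V. \<forall>v\<in>V. (\<lambda>x y. x \<in> V \<and> y \<in> V \<and> E x y)\<^sup>*\<^sup>* u v)"

definition prime_graph :: "'k::field itself \<Rightarrow> 'a::linorder set \<Rightarrow> ('a \<Rightarrow> 'a \<Rightarrow> bool) \<Rightarrow> bool" where
  "prime_graph TYPE('k) V E \<longleftrightarrow> connected_graph V E \<and>
     (\<forall>x\<in>V. reg TYPE('k) (V - {x}) E < reg TYPE('k) V E)"

definition no_induced_2K2 :: "'a set \<Rightarrow> ('a \<Rightarrow> 'a \<Rightarrow> bool) \<Rightarrow> bool" where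
  "no_induced_2K2 V E \<longleftrightarrow> \<not> (\<exists>a\<in>V. \<exists>b\<in>V. \<exists>c\<in>V. \<exists>d\<in>V. distinct [a, b, c, d] \<and>
      E a b \<and> E c d \<and> \<not> E a c \<and> \<not> E a d \<and> \<not> E b c \<and> \<not> E b d)"

definition degree :: "'a set \<Rightarrow> ('a \<Rightarrow> 'a \<Rightarrow> bool) \<Rightarrow> 'a \<Rightarrow> nat" where
  "degree V E v = card {u \<in> V. E v u}"

definition min_degree :: "'a set \<Rightarrow> ('a \<Rightarrow> 'a \<Rightarrow> bool) \<Rightarrow> nat" where
  "min_degree V E = Min (degree V E ` V)"

end

theory Submission
  imports Defs "HOL-Library.Function_Algebras"
begin

text \<open>
  Write \<open>\<Delta>(S)\<close> for the independence complex of \<open>G[S]\<close> and \<open>N[a]\<close> for the closed neighbourhood.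
  A cycle \<open>z\<close> of \<open>\<Delta>(S)\<close> splits along a vertex \<open>a\<close> as \<open>z = z\<^sub>1 + a * z\<^sub>2\<close>, where \<open>z\<^sub>1\<close> avoids \<open>a\<close>,
  \<open>z\<^sub>2\<close> is a cycle of \<open>\<Delta>(S - N[a])\<close> and \<open>\<partial>z\<^sub>1 = -z\<^sub>2\<close>. Hence an isolated vertex makes \<open>\<Delta>(S)\<close> acyclic,
  and if \<open>\<Delta>(S - a)\<close> has no homology in degree \<open>d\<close> then homology of \<open>\<Delta>(S)\<close> in degree \<open>d\<close> forces
  homology of \<open>\<Delta>(S - N[a])\<close> in degree \<open>d - 1\<close>.

  In a \<open>2K\<^sub>2\<close>-free graph with an independent set \<open>I\<close>, induction on \<open>|S|\<close> then shows that homology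
  of \<open>\<Delta>(S)\<close> in degree \<open>d\<close> forces \<open>2d \<le> |S - I|\<close>: passing to \<open>S - N[a]\<close> for an edge \<open>aa'\<close> inside
  \<open>S - I\<close> lowers \<open>d\<close> by one and \<open>|S - I|\<close> by at least two, and if \<open>S - I\<close> is independent its
  neighbourhoods form a chain, so some \<open>S - N[a]\<close> is independent and has no homology in
  degree \<open>\<ge> 0\<close>.

  For a prime graph the homology of degree \<open>reg - 1\<close> lives on \<open>V\<close> and vanishes on every \<open>V - u\<close>.
  Choose \<open>x\<close> of minimum degree and a neighbour \<open>u\<close>: then \<open>\<Delta>(V - N[u])\<close> has homology in degree
  \<open>reg - 2\<close>, the vertices of \<open>V - N[u]\<close> not adjacent to \<open>x\<close> are independent (an edge among them
  would form a \<open>2K\<^sub>2\<close> with \<open>xu\<close>), and the rest lies in \<open>N(x) - u\<close>, so \<open>2(reg - 2) \<le> \<delta> - 1\<close>.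
\<close>

definition incidence_sign :: "'a::linorder \<Rightarrow> 'a set \<Rightarrow> 'k::field" where
  "incidence_sign v \<tau> = (-1) ^ card {u \<in> \<tau>. u < v}"

text \<open>Summing over a fixed finite vertex set \<open>U\<close> instead of the faces of a complex gives a
  boundary that agrees with \<open>bd K\<close> on chains of every \<open>K \<subseteq> Pow U\<close>, so chains of different
  subcomplexes share one linear boundary map.\<close>
definition ambient_bd :: "'a::linorder set \<Rightarrow> ('a set \<Rightarrow> 'k::field) \<Rightarrow> 'a set \<Rightarrow> 'k" where
  "ambient_bd U c \<tau> = (\<Sum>v \<in> U - \<tau>. incidence_sign v \<tau> * c (insert v \<tau>))"

text \<open>The cone \<open>a * w\<close> over a chain \<open>w\<close>, oriented so that \<open>\<partial>(a * w) = w - a * \<partial>w\<close>.\<close>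
definition cone :: "'a::linorder \<Rightarrow> ('a set \<Rightarrow> 'k::field) \<Rightarrow> 'a set \<Rightarrow> 'k" where
  "cone a w \<tau> = (if a \<in> \<tau> then incidence_sign a (\<tau> - {a}) * w (\<tau> - {a}) else 0)"

definition avoids :: "'a \<Rightarrow> ('a set \<Rightarrow> 'k::zero) \<Rightarrow> bool" where
  "avoids a w \<longleftrightarrow> (\<forall>\<sigma>. w \<sigma> \<noteq> 0 \<longrightarrow> finite \<sigma> \<and> a \<notin> \<sigma>)"

definition deletion_part :: "'a \<Rightarrow> ('a set \<Rightarrow> 'k::zero) \<Rightarrow> 'a set \<Rightarrow> 'k" where
  "deletion_part a z \<sigma> = (if a \<in> \<sigma> then 0 else z \<sigma>)"

definition link_part :: "'a::linorder \<Rightarrow> ('a set \<Rightarrow> 'k::field) \<Rightarrow> 'a set \<Rightarrow> 'k" where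
  "link_part a z \<sigma> = (if a \<in> \<sigma> then 0 else incidence_sign a \<sigma> * z (insert a \<sigma>))"

lemma incidence_sign_square: "(incidence_sign v \<tau> :: 'k::field) * incidence_sign v \<tau> = 1"
  by (simp add: incidence_sign_def power_add[symmetric])

lemma incidence_sign_nonzero: "(incidence_sign v \<tau> :: 'k::field) \<noteq> 0"
  by (simp add: incidence_sign_def)

lemma incidence_sign_insert_swap:
  assumes "finite \<rho>" "v \<noteq> a" "v \<notin> \<rho>" "a \<notin> \<rho>"
  shows "(incidence_sign v (insert a \<rho>) :: 'k::field) * incidence_sign a (insert v \<rho>)
           = - (incidence_sign a \<rho> * incidence_sign v \<rho>)"
proof (cases "a < v")
  case True
  then have "{u \<in> insert a \<rho>. u < v} = insert a {u \<in> \<rho>. u < v}"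
    and "{u \<in> insert v \<rho>. u < a} = {u \<in> \<rho>. u < a}" by auto
  with assms show ?thesis by (simp add: incidence_sign_def)
next
  case False
  with assms(2) have "{u \<in> insert a \<rho>. u < v} = {u \<in> \<rho>. u < v}"
    and "{u \<in> insert v \<rho>. u < a} = insert v {u \<in> \<rho>. u < a}" by auto
  with assms show ?thesis by (simp add: incidence_sign_def)
qed

lemma bd_eq_ambient_bd:
  assumes "finite U" "K \<subseteq> Pow U" "\<And>\<sigma>. c \<sigma> \<noteq> 0 \<Longrightarrow> \<sigma> \<in> K"
  shows "bd K c = ambient_bd U c"
proof
  fix \<tau>
  have sub: "{v. v \<notin> \<tau> \<and> insert v \<tau> \<in> K} \<subseteq> U - \<tau>" using assms(2) by auto
  show "bd K c \<tau> = ambient_bd U c \<tau>"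
    unfolding bd_def ambient_bd_def incidence_sign_def
    by (rule sum.mono_neutral_left[OF _ sub]) (use assms in auto)
qed

lemma ambient_bd_add: "ambient_bd U (c + d) = ambient_bd U c + ambient_bd U d"
  by (simp add: fun_eq_iff ambient_bd_def sum.distrib algebra_simps)

lemma ambient_bd_diff: "ambient_bd U (c - d) = ambient_bd U c - ambient_bd U d"
  by (simp add: fun_eq_iff ambient_bd_def sum_subtractf algebra_simps)

lemma avoidsD: "avoids a w \<Longrightarrow> w \<sigma> \<noteq> 0 \<Longrightarrow> finite \<sigma> \<and> a \<notin> \<sigma>"
  by (simp add: avoids_def)

lemma avoids_eq_0: "avoids a w \<Longrightarrow> a \<in> \<sigma> \<or> infinite \<sigma> \<Longrightarrow> w \<sigma> = 0"
  unfolding avoids_def by blast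

lemma ambient_bd_avoids:
  assumes "avoids a w"
  shows "avoids a (ambient_bd U w)"
  unfolding avoids_def
proof (intro allI impI)
  fix \<tau> assume "ambient_bd U w \<tau> \<noteq> 0"
  then obtain v where "incidence_sign v \<tau> * w (insert v \<tau>) \<noteq> 0"
    unfolding ambient_bd_def by (rule sum.not_neutral_contains_not_neutral)
  then have "w (insert v \<tau>) \<noteq> 0" by simp
  from avoidsD[OF assms this] show "finite \<tau> \<and> a \<notin> \<tau>" by simp
qed

lemma cone_eq_0: "a \<notin> \<tau> \<Longrightarrow> cone a w \<tau> = 0"
  by (simp add: cone_def)

lemma cone_insert: "a \<notin> \<sigma> \<Longrightarrow> cone a w (insert a \<sigma>) = incidence_sign a \<sigma> * w \<sigma>"
  by (simp add: cone_def)

lemma cone_uminus: "cone a (- w) = - cone a w"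
  by (simp add: fun_eq_iff cone_def)

lemma cone_eq_0_imp_eq_0:
  assumes "cone a w = 0" "avoids a w"
  shows "w = 0"
proof (rule ext)
  fix \<sigma>
  show "w \<sigma> = 0 \<sigma>"
  proof (cases "a \<in> \<sigma>")
    case True
    then show ?thesis using avoids_eq_0[OF assms(2)] by simp
  next
    case False
    then have "incidence_sign a \<sigma> * w \<sigma> = 0"
      using fun_cong[OF assms(1), of "insert a \<sigma>"] by (simp add: cone_insert)
    then show ?thesis by (simp add: incidence_sign_nonzero)
  qed
qed

lemma ambient_bd_cone_off_apex:
  assumes "finite U" "a \<in> U" "a \<notin> \<tau>" "avoids a w"
  shows "ambient_bd U (cone a w) \<tau> = w \<tau>"
proof -
  have aU: "a \<in> U - \<tau>" using assms by auto
  have "ambient_bd U (cone a w) \<tau> = incidence_sign a \<tau> * cone a w (insert a \<tau>)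
      + (\<Sum>v \<in> U - \<tau> - {a}. incidence_sign v \<tau> * cone a w (insert v \<tau>))"
    unfolding ambient_bd_def using sum.remove[OF _ aU] assms(1) by auto
  also have "(\<Sum>v \<in> U - \<tau> - {a}. incidence_sign v \<tau> * cone a w (insert v \<tau>)) = 0"
    using assms(3) by (intro sum.neutral) (auto simp: cone_def)
  finally show ?thesis
    using assms(3) by (simp add: cone_insert mult.assoc[symmetric] incidence_sign_square)
qed

lemma ambient_bd_cone_at_apex:
  fixes w :: "'a::linorder set \<Rightarrow> 'k::field"
  assumes "finite U" "a \<in> U" "a \<in> \<tau>" "avoids a w"
  shows "ambient_bd U (cone a w) \<tau> = - cone a (ambient_bd U w) \<tau>"
proof (cases "finite \<tau>")
  case False
  then have "cone a w (insert v \<tau>) = 0" for v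
    using avoids_eq_0[OF assms(4)] by (simp add: cone_def)
  moreover have "ambient_bd U w (\<tau> - {a}) = 0"
    using False avoids_eq_0[OF ambient_bd_avoids[OF assms(4)]] by simp
  ultimately show ?thesis by (simp add: ambient_bd_def cone_def)
next
  case True
  define \<rho> where "\<rho> = \<tau> - {a}"
  have a\<rho>: "a \<notin> \<rho>" and \<tau>: "\<tau> = insert a \<rho>" and f\<rho>: "finite \<rho>"
    using assms(3) True by (auto simp: \<rho>_def)
  have summand: "incidence_sign v \<tau> * cone a w (insert v \<tau>)
      = - (incidence_sign a \<rho> * (incidence_sign v \<rho> * w (insert v \<rho>)))"
    if "v \<in> U - \<tau>" for v
  proof -
    have v: "v \<noteq> a" "v \<notin> \<rho>" using that \<tau> by auto
    have "insert v \<tau> = insert a (insert v \<rho>)" by (simp add: \<tau> insert_commute)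
    then have "incidence_sign v \<tau> * cone a w (insert v \<tau>)
        = (incidence_sign v \<tau> * incidence_sign a (insert v \<rho>)) * w (insert v \<rho>)"
      using v a\<rho> by (simp add: cone_insert mult.assoc)
    also have "incidence_sign v \<tau> * incidence_sign a (insert v \<rho>)
        = - (incidence_sign a \<rho> * incidence_sign v \<rho>)"
      unfolding \<tau> by (rule incidence_sign_insert_swap[OF f\<rho> v a\<rho>])
    finally show ?thesis by (simp add: mult.assoc)
  qed
  have "U - \<rho> = insert a (U - \<tau>)" "a \<notin> U - \<tau>" "w (insert a \<rho>) = 0"
    using assms(2,3) avoids_eq_0[OF assms(4)] by (auto simp: \<rho>_def)
  then have "ambient_bd U w \<rho> = (\<Sum>v \<in> U - \<tau>. incidence_sign v \<rho> * w (insert v \<rho>))"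
    using assms(1) by (simp add: ambient_bd_def)
  then have "- cone a (ambient_bd U w) \<tau>
      = (\<Sum>v \<in> U - \<tau>. - (incidence_sign a \<rho> * (incidence_sign v \<rho> * w (insert v \<rho>))))"
    using a\<rho> by (simp add: \<tau> cone_insert sum_distrib_left sum_negf)
  also have "\<dots> = ambient_bd U (cone a w) \<tau>"
    unfolding ambient_bd_def by (rule sum.cong[OF refl summand[symmetric]])
  finally show ?thesis by (rule sym)
qed

lemma ambient_bd_cone:
  assumes "finite U" "a \<in> U" "avoids a w"
  shows "ambient_bd U (cone a w) = w - cone a (ambient_bd U w)"
proof
  fix \<tau>
  show "ambient_bd U (cone a w) \<tau> = (w - cone a (ambient_bd U w)) \<tau>"
    using ambient_bd_cone_off_apex[OF assms(1,2) _ assms(3)]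
      ambient_bd_cone_at_apex[OF assms(1,2) _ assms(3)] assms(3)
    by (cases "a \<in> \<tau>") (simp_all add: cone_eq_0 avoids_eq_0)
qed

lemma deletion_link_decomposition: "z = deletion_part a z + cone a (link_part a z)"
proof
  fix \<tau>
  show "z \<tau> = (deletion_part a z + cone a (link_part a z)) \<tau>"
  proof (cases "a \<in> \<tau>")
    case True
    then have "insert a (\<tau> - {a}) = \<tau>" by auto
    with True show ?thesis
      by (simp add: deletion_part_def link_part_def cone_def mult.assoc[symmetric]
          incidence_sign_square)
  qed (simp add: deletion_part_def cone_def)
qed

lemma avoids_deletion_part: "(\<And>\<sigma>. z \<sigma> \<noteq> 0 \<Longrightarrow> finite \<sigma>) \<Longrightarrow> avoids a (deletion_part a z)"
  by (simp add: avoids_def deletion_part_def)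

lemma avoids_link_part: "(\<And>\<sigma>. z \<sigma> \<noteq> 0 \<Longrightarrow> finite \<sigma>) \<Longrightarrow> avoids a (link_part a z)"
  unfolding avoids_def link_part_def by (metis finite_insert mult_zero_right)

lemma ambient_bd_cycle_parts:
  assumes "finite U" "a \<in> U" "\<And>\<sigma>. z \<sigma> \<noteq> 0 \<Longrightarrow> finite \<sigma>" "ambient_bd U z = 0"
  shows "ambient_bd U (deletion_part a z) = - link_part a z"
    and "ambient_bd U (link_part a z) = 0"
proof -
  let ?z1 = "deletion_part a z" and ?z2 = "link_part a z"
  have av1: "avoids a ?z1" and av2: "avoids a ?z2"
    using assms(3) by (simp_all add: avoids_deletion_part avoids_link_part)
  have "ambient_bd U z = ambient_bd U (?z1 + cone a ?z2)"
    using deletion_link_decomposition[of z a] by (rule arg_cong)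
  also have "\<dots> = ambient_bd U ?z1 + (?z2 - cone a (ambient_bd U ?z2))"
    by (simp add: ambient_bd_add ambient_bd_cone[OF assms(1,2) av2])
  finally have "ambient_bd U ?z1 + (?z2 - cone a (ambient_bd U ?z2)) = 0"
    using assms(4) by simp
  then have sum_eq: "ambient_bd U ?z1 + ?z2 = cone a (ambient_bd U ?z2)"
    by (simp add: add_diff_eq right_minus_eq)
  have parts: "ambient_bd U ?z1 \<tau> + ?z2 \<tau> = cone a (ambient_bd U ?z2) \<tau>" for \<tau>
    using fun_cong[OF sum_eq, of \<tau>] by simp
  have cone0: "cone a (ambient_bd U ?z2) \<tau> = 0" for \<tau>
  proof (cases "a \<in> \<tau>")
    case True
    with parts[of \<tau>] avoids_eq_0[OF ambient_bd_avoids[OF av1]] avoids_eq_0[OF av2]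
    show ?thesis by simp
  qed (simp add: cone_eq_0)
  then show "ambient_bd U ?z2 = 0"
    using cone_eq_0_imp_eq_0[OF _ ambient_bd_avoids[OF av2]] by (simp add: fun_eq_iff)
  show "ambient_bd U ?z1 = - ?z2"
    using parts cone0 by (simp add: fun_eq_iff eq_neg_iff_add_eq_0)
qed

definition independent :: "'a set \<Rightarrow> ('a \<Rightarrow> 'a \<Rightarrow> bool) \<Rightarrow> bool" where
  "independent T E \<longleftrightarrow> (\<forall>u\<in>T. \<forall>v\<in>T. \<not> E u v)"

lemma ind_complex_eq: "ind_complex S E = {\<sigma>. \<sigma> \<subseteq> S \<and> independent \<sigma> E}"
  by (simp add: ind_complex_def independent_def)

lemma independent_subset: "independent T E \<Longrightarrow> T' \<subseteq> T \<Longrightarrow> independent T' E"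
  unfolding independent_def by blast

lemma is_chain_ind_complex_iff:
  "is_chain (ind_complex S E) d c \<longleftrightarrow>
     (\<forall>\<sigma>. c \<sigma> \<noteq> 0 \<longrightarrow> \<sigma> \<subseteq> S \<and> independent \<sigma> E \<and> finite \<sigma> \<and> int (card \<sigma>) = d + 1)"
  by (auto simp: is_chain_def ind_complex_eq)

lemma is_chain_finite: "is_chain K d c \<Longrightarrow> c \<sigma> \<noteq> 0 \<Longrightarrow> finite \<sigma>"
  by (simp add: is_chain_def)

lemma is_chain_zero: "is_chain K d 0"
  by (simp add: is_chain_def)

lemma is_chain_add: "is_chain K d c \<Longrightarrow> is_chain K d c' \<Longrightarrow> is_chain K d (c + c')"
  unfolding is_chain_def by (metis add.right_neutral plus_fun_apply)

lemma is_chain_diff: "is_chain K d c \<Longrightarrow> is_chain K d c' \<Longrightarrow> is_chain K d (c - c')"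
  unfolding is_chain_def by (metis diff_self minus_apply)

lemma is_chain_mono: "is_chain K d c \<Longrightarrow> K \<subseteq> K' \<Longrightarrow> is_chain K' d c"
  unfolding is_chain_def by blast

lemma ind_complex_mono: "S' \<subseteq> S \<Longrightarrow> ind_complex S' E \<subseteq> ind_complex S E"
  by (auto simp: ind_complex_def)

lemma bd_ind_complex:
  assumes "finite U" "S \<subseteq> U" "is_chain (ind_complex S E) d c"
  shows "bd (ind_complex S E) c = ambient_bd U c"
  using assms by (intro bd_eq_ambient_bd) (auto simp: ind_complex_def is_chain_def)

lemma red_hom_nonzero_ind_complex:
  assumes "finite U" "S \<subseteq> U"
  shows "red_hom_nonzero TYPE('k::field) (ind_complex S E) d \<longleftrightarrow>
    (\<exists>z :: 'a::linorder set \<Rightarrow> 'k. is_chain (ind_complex S E) d z \<and> ambient_bd U z = 0 \<and>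
       \<not> (\<exists>b. is_chain (ind_complex S E) (d + 1) b \<and> ambient_bd U b = z))"
  unfolding red_hom_nonzero_def zero_fun_def
  by (metis (no_types) bd_ind_complex[OF assms])

lemma is_chain_cone:
  assumes "is_chain (ind_complex T E) d w" "a \<in> S" "T \<subseteq> S"
    "\<forall>v\<in>insert a T. \<not> E a v" "\<And>u v. E u v \<Longrightarrow> E v u"
  shows "is_chain (ind_complex S E) (d + 1) (cone a w)"
  unfolding is_chain_ind_complex_iff
proof (intro allI impI)
  fix \<sigma> assume "cone a w \<sigma> \<noteq> 0"
  then have a\<sigma>: "a \<in> \<sigma>" and w: "w (\<sigma> - {a}) \<noteq> 0"
    by (auto simp: cone_def split: if_splits)
  from assms(1) w have "\<sigma> - {a} \<subseteq> T" "independent (\<sigma> - {a}) E" "finite (\<sigma> - {a})"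
    "int (card (\<sigma> - {a})) = d + 1"
    unfolding is_chain_ind_complex_iff by blast+
  moreover have "independent \<sigma> E"
    using \<open>independent (\<sigma> - {a}) E\<close> \<open>\<sigma> - {a} \<subseteq> T\<close> assms(4,5)
    unfolding independent_def by (metis insert_iff insert_Diff subsetD a\<sigma>)
  ultimately show "\<sigma> \<subseteq> S \<and> independent \<sigma> E \<and> finite \<sigma> \<and> int (card \<sigma>) = d + 1 + 1"
    using assms(2,3) a\<sigma> card_Suc_Diff1[of \<sigma> a] by auto
qed

lemma is_chain_deletion_part:
  "is_chain (ind_complex S E) d z \<Longrightarrow> is_chain (ind_complex (S - {a}) E) d (deletion_part a z)"
  unfolding is_chain_ind_complex_iff deletion_part_def by auto

lemma is_chain_link_part:
  assumes "is_chain (ind_complex S E) d z"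
  shows "is_chain (ind_complex (S - {a} - {v. E a v}) E) (d - 1) (link_part a z)"
  unfolding is_chain_ind_complex_iff
proof (intro allI impI)
  fix \<sigma> assume "link_part a z \<sigma> \<noteq> 0"
  then have a\<sigma>: "a \<notin> \<sigma>" and z: "z (insert a \<sigma>) \<noteq> 0"
    by (auto simp: link_part_def split: if_splits)
  from assms z have "insert a \<sigma> \<subseteq> S" "independent (insert a \<sigma>) E" "finite \<sigma>"
    "int (card (insert a \<sigma>)) = d + 1"
    unfolding is_chain_ind_complex_iff by auto
  with a\<sigma> show "\<sigma> \<subseteq> S - {a} - {v. E a v} \<and> independent \<sigma> E \<and> finite \<sigma> \<and> int (card \<sigma>) = d - 1 + 1"
    unfolding independent_def by auto
qed

lemma avoids_if_is_chain:
  "is_chain (ind_complex T E) d w \<Longrightarrow> a \<notin> T \<Longrightarrow> avoids a w"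
  unfolding is_chain_ind_complex_iff avoids_def by blast

lemma ind_complex_acyclic_if_isolated:
  fixes E :: "'a::linorder \<Rightarrow> 'a \<Rightarrow> bool"
  assumes "finite S" "a \<in> S" "\<forall>v\<in>S. \<not> E a v" "\<And>u v. E u v \<Longrightarrow> E v u"
  shows "\<not> red_hom_nonzero TYPE('k::field) (ind_complex S E) d"
proof
  assume "red_hom_nonzero TYPE('k) (ind_complex S E) d"
  then obtain z :: "'a set \<Rightarrow> 'k" where z: "is_chain (ind_complex S E) d z" "ambient_bd S z = 0"
    and not_bd: "\<not> (\<exists>b. is_chain (ind_complex S E) (d + 1) b \<and> ambient_bd S b = z)"
    unfolding red_hom_nonzero_ind_complex[OF assms(1) order_refl] by blast
  let ?z1 = "deletion_part a z" and ?z2 = "link_part a z"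
  have fin: "\<And>\<sigma>. z \<sigma> \<noteq> 0 \<Longrightarrow> finite \<sigma>" using is_chain_finite[OF z(1)] .
  have av1: "avoids a ?z1" using avoids_deletion_part[OF fin] .
  have "is_chain (ind_complex S E) (d + 1) (cone a ?z1)"
    using assms(2,3) by (intro is_chain_cone[OF is_chain_deletion_part[OF z(1)] _ _ _ assms(4)]) auto
  moreover
  have "ambient_bd S (cone a ?z1) = ?z1 - cone a (- ?z2)"
    by (simp add: ambient_bd_cone[OF assms(1,2) av1] ambient_bd_cycle_parts(1)[OF assms(1,2) fin z(2)])
  then have "ambient_bd S (cone a ?z1) = z"
    by (simp add: cone_uminus deletion_link_decomposition[symmetric])
  ultimately show False using not_bd by blast
qed

lemma red_hom_nonzero_link:
  fixes E :: "'a::linorder \<Rightarrow> 'a \<Rightarrow> bool"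
  assumes "finite S" "a \<in> S" "\<And>u v. E u v \<Longrightarrow> E v u" "\<And>v. \<not> E v v"
    and "red_hom_nonzero TYPE('k::field) (ind_complex S E) d"
    and "\<not> red_hom_nonzero TYPE('k) (ind_complex (S - {a}) E) d"
  shows "red_hom_nonzero TYPE('k) (ind_complex (S - {a} - {v. E a v}) E) (d - 1)"
proof (rule ccontr)
  let ?T = "S - {a} - {v. E a v}"
  have TS: "?T \<subseteq> S" and TSa: "?T \<subseteq> S - {a}" by auto
  assume no_link: "\<not> red_hom_nonzero TYPE('k) (ind_complex ?T E) (d - 1)"
  obtain z :: "'a set \<Rightarrow> 'k" where z: "is_chain (ind_complex S E) d z" "ambient_bd S z = 0"
    and not_bd: "\<not> (\<exists>b. is_chain (ind_complex S E) (d + 1) b \<and> ambient_bd S b = z)"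
    using assms(5) unfolding red_hom_nonzero_ind_complex[OF assms(1) order_refl] by blast
  let ?z1 = "deletion_part a z" and ?z2 = "link_part a z"
  have fin: "\<And>\<sigma>. z \<sigma> \<noteq> 0 \<Longrightarrow> finite \<sigma>" using is_chain_finite[OF z(1)] .
  note parts = ambient_bd_cycle_parts[OF assms(1,2) fin z(2)]
  obtain w where w: "is_chain (ind_complex ?T E) d w" "ambient_bd S w = ?z2"
    using no_link is_chain_link_part[OF z(1)] parts(2)
    unfolding red_hom_nonzero_ind_complex[OF assms(1) TS] by auto
  have avw: "avoids a w" using avoids_if_is_chain[OF w(1)] by blast
  define C where "C = cone a w"
  have C: "is_chain (ind_complex S E) (d + 1) C"
    unfolding C_def using assms(2,4) by (intro is_chain_cone[OF w(1) _ TS _ assms(3)]) auto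
  have bd_C: "ambient_bd S C = w - cone a ?z2"
    unfolding C_def by (simp add: ambient_bd_cone[OF assms(1,2) avw] w(2))
  have "is_chain (ind_complex (S - {a}) E) d (?z1 + w)"
    using is_chain_deletion_part[OF z(1)] is_chain_mono[OF w(1) ind_complex_mono[OF TSa]]
    by (rule is_chain_add)
  moreover have "ambient_bd S (?z1 + w) = 0"
    by (simp add: ambient_bd_add parts(1) w(2))
  ultimately obtain b' where b': "is_chain (ind_complex (S - {a}) E) (d + 1) b'"
    "ambient_bd S b' = ?z1 + w"
    using assms(6) unfolding red_hom_nonzero_ind_complex[OF assms(1) Diff_subset] by blast
  have "is_chain (ind_complex S E) (d + 1) (b' - C)"
    using is_chain_mono[OF b'(1) ind_complex_mono[OF Diff_subset]] C by (rule is_chain_diff)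
  moreover have "ambient_bd S (b' - C) = ?z1 + cone a ?z2"
    by (simp add: ambient_bd_diff b'(2) bd_C)
  then have "ambient_bd S (b' - C) = z"
    by (simp add: deletion_link_decomposition[symmetric])
  ultimately show False using not_bd by blast
qed

lemma red_hom_nonzero_degree_le_card:
  assumes "finite S" "red_hom_nonzero TYPE('k::field) (ind_complex S E) d"
  shows "d + 1 \<le> int (card S)"
proof -
  obtain z :: "'a::linorder set \<Rightarrow> 'k" where z: "is_chain (ind_complex S E) d z"
    and not_bd: "\<not> (\<exists>b. is_chain (ind_complex S E) (d + 1) b \<and> ambient_bd S b = z)"
    using assms(2) unfolding red_hom_nonzero_ind_complex[OF assms(1) order_refl] by blast
  have "ambient_bd S 0 = (0 :: 'a set \<Rightarrow> 'k)" by (simp add: ambient_bd_def fun_eq_iff)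
  with not_bd is_chain_zero have "z \<noteq> 0" by blast
  then obtain \<sigma> where "z \<sigma> \<noteq> 0" by (auto simp: fun_eq_iff)
  with z have "\<sigma> \<subseteq> S" "int (card \<sigma>) = d + 1"
    unfolding is_chain_ind_complex_iff by auto
  moreover from this(1) have "card \<sigma> \<le> card S" by (rule card_mono[OF assms(1)])
  ultimately show ?thesis by linarith
qed

text \<open>The empty complex \<open>{{}}\<close> has \<open>H\<^sub>-\<^sub>1 = \<Bbbk>\<close>, so \<open>reg\<close> is the maximum of a nonempty set.\<close>
lemma red_hom_nonzero_empty: "red_hom_nonzero TYPE('k::field) (ind_complex {} E) (-1)"
proof -
  have K: "ind_complex {} E = {{}}" by (auto simp: ind_complex_def)
  define z :: "'a::linorder set \<Rightarrow> 'k" where "z \<sigma> = (if \<sigma> = {} then 1 else 0)" for \<sigma>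
  have "is_chain {{}} (-1) z" by (simp add: is_chain_def z_def)
  moreover have "bd {{}} c = (\<lambda>_. 0)" for c :: "'a set \<Rightarrow> 'k" by (simp add: bd_def fun_eq_iff)
  moreover have "z \<noteq> (\<lambda>_. 0)" by (auto simp: z_def fun_eq_iff)
  ultimately show ?thesis unfolding red_hom_nonzero_def K by metis
qed

lemma finite_homological_degrees:
  assumes "finite V"
  shows "finite {j::nat. \<exists>S \<subseteq> V. red_hom_nonzero TYPE('k::field) (ind_complex S E) (int j - 1)}"
    (is "finite ?R")
proof (rule finite_subset)
  show "?R \<subseteq> {..card V}"
  proof
    fix j assume "j \<in> ?R"
    then obtain S where S: "S \<subseteq> V" "red_hom_nonzero TYPE('k) (ind_complex S E) (int j - 1)"
      by blast
    have "int j - 1 + 1 \<le> int (card S)"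
      using red_hom_nonzero_degree_le_card[OF finite_subset[OF S(1) assms] S(2)] .
    moreover have "card S \<le> card V" using card_mono[OF assms S(1)] .
    ultimately show "j \<in> {..card V}" by simp
  qed
qed simp

lemma reg_attained:
  assumes "finite V"
  shows "\<exists>S \<subseteq> V. red_hom_nonzero TYPE('k::field) (ind_complex S E) (int (reg TYPE('k) V E) - 1)"
proof -
  have "0 \<in> {j::nat. \<exists>S \<subseteq> V. red_hom_nonzero TYPE('k) (ind_complex S E) (int j - 1)}"
    using red_hom_nonzero_empty by force
  then show ?thesis
    using Max_in[OF finite_homological_degrees[OF assms]] unfolding reg_def by blast
qed

lemma reg_maximal:
  assumes "finite V" "S \<subseteq> V" "red_hom_nonzero TYPE('k::field) (ind_complex S E) (int j - 1)"
  shows "j \<le> reg TYPE('k) V E"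
  unfolding reg_def using assms by (intro Max_ge[OF finite_homological_degrees[OF assms(1)]]) blast

lemma prime_graph_top_homology:
  assumes "finite V" "prime_graph TYPE('k::field) V E"
  shows "red_hom_nonzero TYPE('k) (ind_complex V E) (int (reg TYPE('k) V E) - 1)"
    and "x \<in> V \<Longrightarrow> \<not> red_hom_nonzero TYPE('k) (ind_complex (V - {x}) E) (int (reg TYPE('k) V E) - 1)"
proof -
  have drop: "\<not> red_hom_nonzero TYPE('k) (ind_complex S E) (int (reg TYPE('k) V E) - 1)"
    if x: "x \<in> V" and S: "S \<subseteq> V - {x}" for x S
  proof
    assume "red_hom_nonzero TYPE('k) (ind_complex S E) (int (reg TYPE('k) V E) - 1)"
    then have "reg TYPE('k) V E \<le> reg TYPE('k) (V - {x}) E"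
      using assms(1) S by (intro reg_maximal) auto
    moreover have "reg TYPE('k) (V - {x}) E < reg TYPE('k) V E"
      using assms(2) x unfolding prime_graph_def by blast
    ultimately show False by simp
  qed
  obtain S where S: "S \<subseteq> V" "red_hom_nonzero TYPE('k) (ind_complex S E) (int (reg TYPE('k) V E) - 1)"
    using reg_attained[OF assms(1)] by blast
  have "S = V"
  proof (rule ccontr)
    assume "S \<noteq> V"
    with S(1) obtain x where "x \<in> V" "S \<subseteq> V - {x}" by blast
    with drop S(2) show False by blast
  qed
  with S(2) show "red_hom_nonzero TYPE('k) (ind_complex V E) (int (reg TYPE('k) V E) - 1)" by simp
  show "x \<in> V \<Longrightarrow> \<not> red_hom_nonzero TYPE('k) (ind_complex (V - {x}) E) (int (reg TYPE('k) V E) - 1)"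
    using drop by blast
qed

lemma red_hom_nonzero_independent_imp_neg:
  fixes E :: "'a::linorder \<Rightarrow> 'a \<Rightarrow> bool"
  assumes "finite T" "independent T E" "\<And>u v. E u v \<Longrightarrow> E v u"
    and "red_hom_nonzero TYPE('k::field) (ind_complex T E) d"
  shows "d < 0"
proof (cases "T = {}")
  case True
  with red_hom_nonzero_degree_le_card[OF assms(1,4)] show ?thesis by simp
next
  case False
  then obtain a where "a \<in> T" by blast
  with assms(2) have "\<forall>v\<in>T. \<not> E a v" unfolding independent_def by blast
  from ind_complex_acyclic_if_isolated[of T a E, OF assms(1) \<open>a \<in> T\<close> this assms(3)] assms(4)
  show ?thesis by blast
qed

lemma no_induced_2K2D:
  assumes "no_induced_2K2 V E" "a \<in> V" "b \<in> V" "c \<in> V" "d \<in> V" "distinct [a, b, c, d]"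
    and "E a b" "E c d"
  shows "E a c \<or> E a d \<or> E b c \<or> E b d"
  using assms unfolding no_induced_2K2_def by blast

lemma independent_common_non_neighbourhood:
  assumes "no_induced_2K2 V E" "\<And>u v. E u v \<Longrightarrow> E v u" "\<And>v. \<not> E v v"
    and "x \<in> V" "u \<in> V" "E x u"
  shows "independent (V - {v. E x v} - {v. E u v}) E"
  unfolding independent_def
proof (intro ballI notI)
  fix y w assume y: "y \<in> V - {v. E x v} - {v. E u v}" and w: "w \<in> V - {v. E x v} - {v. E u v}"
    and yw: "E y w"
  have "E u x" using assms(2,6) .
  then have "distinct [x, u, y, w]"
    using y w yw assms(3)[of x] assms(3)[of y] assms(6) by auto
  from no_induced_2K2D[OF assms(1,4,5) _ _ this assms(6) yw] y w show False by blast
qed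

lemma neighbourhoods_nested:
  assumes "no_induced_2K2 V E" "\<And>u v. E u v \<Longrightarrow> E v u" "\<And>v. \<not> E v v"
    and "S \<subseteq> V" "A \<subseteq> S" "independent A E" "independent (S - A) E" "a \<in> A" "a' \<in> A"
  shows "{v \<in> S. E a v} \<subseteq> {v \<in> S. E a' v} \<or> {v \<in> S. E a' v} \<subseteq> {v \<in> S. E a v}"
proof (rule ccontr)
  assume "\<not> ?thesis"
  then obtain b b' where b: "b \<in> S" "E a b" "\<not> E a' b" and b': "b' \<in> S" "E a' b'" "\<not> E a b'"
    by blast
  have aa': "\<not> E a a'" "\<not> E a' a" using assms(6,8,9) unfolding independent_def by blast+
  then have "b \<notin> A" "b' \<notin> A" using assms(6,8,9) b(2) b'(2) unfolding independent_def by blast+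
  then have "\<not> E b b'" using assms(7) b(1) b'(1) unfolding independent_def by blast
  have "distinct [a, b, a', b']"
    using \<open>b \<notin> A\<close> \<open>b' \<notin> A\<close> assms(8,9) b b' assms(3)[of a] assms(3)[of a'] by auto
  from no_induced_2K2D[OF assms(1) _ _ _ _ this b(2) b'(2)] assms(4,5,8,9) b(1) b'(1)
  have "E a a' \<or> E a b' \<or> E b a' \<or> E b b'" by blast
  with aa' b'(3) \<open>\<not> E b b'\<close> b(3) assms(2)[of b a'] show False by blast
qed

text \<open>In a \<open>2K\<^sub>2\<close>-free graph split into two independent sets, the neighbourhoods of \<open>A\<close>
  form a chain, so a vertex of \<open>A\<close> with the largest neighbourhood dominates every edge.\<close>
lemma exists_vertex_independent_non_neighbourhood:
  assumes "no_induced_2K2 V E" "\<And>u v. E u v \<Longrightarrow> E v u" "\<And>v. \<not> E v v"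
    and "finite S" "S \<subseteq> V" "A \<subseteq> S" "A \<noteq> {}" "independent A E" "independent (S - A) E"
  shows "\<exists>a\<in>A. independent (S - {a} - {v. E a v}) E"
proof -
  define N where "N x = {v \<in> S. E x v}" for x
  have "card (N x) < Suc (card S)" for x
    using card_mono[OF assms(4)] by (simp add: N_def le_imp_less_Suc)
  then obtain a where a: "a \<in> A" and largest: "\<And>a'. a' \<in> A \<Longrightarrow> card (N a') \<le> card (N a)"
    using Lattices_Big.ex_has_greatest_nat[of "\<lambda>x. x \<in> A" _ "\<lambda>x. card (N x)"] assms(7) by blast
  have nested: "N a' \<subseteq> N a" if "a' \<in> A" for a'
  proof -
    have "finite (N a')" using assms(4) by (simp add: N_def)
    moreover have "N a \<subseteq> N a' \<or> N a' \<subseteq> N a"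
      unfolding N_def using neighbourhoods_nested[OF assms(1-3,5,6,8,9) a that] .
    ultimately show ?thesis
      using largest[OF that] card_subset_eq[of "N a'" "N a"] card_mono[of "N a'" "N a"] by fastforce
  qed
  have no_edge_from_A: "\<not> E y w" if "y \<in> A" "w \<in> S - {a} - {v. E a v}" for y w
    using nested[OF that(1)] that unfolding N_def by blast
  have "independent (S - {a} - {v. E a v}) E"
    unfolding independent_def
  proof (intro ballI notI)
    fix y w assume y: "y \<in> S - {a} - {v. E a v}" and w: "w \<in> S - {a} - {v. E a v}" and "E y w"
    then have "y \<notin> A" "w \<notin> A" using no_edge_from_A assms(2) by blast+
    with y w \<open>E y w\<close> assms(9) show False unfolding independent_def by blast
  qed
  with a show ?thesis by blast
qed

lemma card_remove_closed_neighbourhood: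
  assumes "finite S" "a \<in> S - I" "a' \<in> S - I" "E a a'" "\<not> E a a"
  shows "card (S - {a} - {v. E a v} - I) + 2 \<le> card (S - I)"
proof -
  let ?R = "S - {a} - {v. E a v} - I"
  have "a \<noteq> a'" using assms(4,5) by blast
  have "card ?R + card {a, a'} = card (?R \<union> {a, a'})"
    using assms(1,4) by (intro card_Un_disjoint[symmetric]) auto
  also have "\<dots> \<le> card (S - I)"
    using assms(1-3) by (intro card_mono) auto
  finally show ?thesis using \<open>a \<noteq> a'\<close> by simp
qed

lemma bipartite_link_homology_degree_nonpos:
  fixes E :: "'a::linorder \<Rightarrow> 'a \<Rightarrow> bool"
  assumes "no_induced_2K2 V E" "\<And>u v. E u v \<Longrightarrow> E v u" "\<And>v. \<not> E v v"
    and "finite S" "S \<subseteq> V" "independent I E" "independent (S - I) E"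
    and "red_hom_nonzero TYPE('k::field) (ind_complex S E) d"
    and "\<And>a. a \<in> S - I \<Longrightarrow> red_hom_nonzero TYPE('k) (ind_complex (S - {a} - {v. E a v}) E) (d - 1)"
  shows "d \<le> 0"
proof (cases "S - I = {}")
  case True
  then have "S \<subseteq> I" by blast
  with assms(6) have "independent S E" by (rule independent_subset)
  from red_hom_nonzero_independent_imp_neg[OF assms(4) this assms(2) assms(8)] show ?thesis by simp
next
  case False
  have "S - (S - I) \<subseteq> I" by blast
  with assms(6) have "independent (S - (S - I)) E" by (rule independent_subset)
  from exists_vertex_independent_non_neighbourhood[OF assms(1-5) Diff_subset False assms(7) this]
  obtain a where a: "a \<in> S - I" and indep: "independent (S - {a} - {v. E a v}) E" by blast
  have "finite (S - {a} - {v. E a v})" using assms(4) by simp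
  from red_hom_nonzero_independent_imp_neg[OF this indep assms(2) assms(9)[OF a]] show ?thesis by simp
qed

lemma twice_degree_le_card_diff_independent:
  fixes E :: "'a::linorder \<Rightarrow> 'a \<Rightarrow> bool"
  assumes no2: "no_induced_2K2 V E" and sym: "\<And>u v. E u v \<Longrightarrow> E v u" and irr: "\<And>v. \<not> E v v"
    and "finite S" "S \<subseteq> V" "independent I E"
    and "red_hom_nonzero TYPE('k::field) (ind_complex S E) d"
  shows "2 * d \<le> int (card (S - I))"
  using assms(4-7)
proof (induction "card S" arbitrary: S d rule: less_induct)
  case less
  note S = less.prems
  define A where "A = S - I"
  have A: "finite A" "A \<subseteq> S" using S(1) by (auto simp: A_def)
  show ?case
  proof (rule ccontr)
    assume small: "\<not> 2 * d \<le> int (card (S - I))"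
    have link: "red_hom_nonzero TYPE('k) (ind_complex (S - {a} - {v. E a v}) E) (d - 1)"
      if a: "a \<in> A" for a
    proof -
      have "\<not> red_hom_nonzero TYPE('k) (ind_complex (S - {a}) E) d"
      proof
        assume "red_hom_nonzero TYPE('k) (ind_complex (S - {a}) E) d"
        moreover have "card (S - {a}) < card S" using a A S(1) by (intro card_Diff1_less) auto
        ultimately have "2 * d \<le> int (card (S - {a} - I))"
          using less.hyps S(1-3) by auto
        moreover have "card (S - {a} - I) \<le> card (S - I)" using S(1) by (intro card_mono) auto
        ultimately show False using small by linarith
      qed
      with red_hom_nonzero_link[OF S(1) _ sym irr S(4)] a A(2) show ?thesis by blast
    qed
    show False
    proof (cases "independent A E")
      case True
      have "d \<le> 0"
      proof (rule bipartite_link_homology_degree_nonpos[OF no2 sym irr S(1-3) _ S(4)])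
        show "independent (S - I) E" using True by (simp add: A_def)
        show "red_hom_nonzero TYPE('k) (ind_complex (S - {a} - {v. E a v}) E) (d - 1)"
          if "a \<in> S - I" for a
          using link that by (simp add: A_def)
      qed
      with small show False by simp
    next
      case False
      then obtain a a' where a: "a \<in> A" "a' \<in> A" "E a a'" unfolding independent_def by blast
      let ?T = "S - {a} - {v. E a v}"
      have "card ?T < card S" using a A S(1) by (intro psubset_card_mono) auto
      then have "2 * (d - 1) \<le> int (card (?T - I))"
        by (rule less.hyps) (use S(1-3) link[OF a(1)] in auto)
      moreover have "card (?T - I) + 2 \<le> card A"
        using card_remove_closed_neighbourhood[OF S(1), of a I a'] a irr unfolding A_def by blast
      ultimately show False using small unfolding A_def by arith
    qed
  qed
qed

lemma min_degree_attained:
  "finite V \<Longrightarrow> V \<noteq> {} \<Longrightarrow> \<exists>x\<in>V. degree V E x = min_degree V E"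
  unfolding min_degree_def using Min_in[of "degree V E ` V"] by (metis finite_imageI image_iff image_is_empty)

theorem mainTheorem20:
  fixes V :: "'a::linorder set" and E :: "'a \<Rightarrow> 'a \<Rightarrow> bool"
  assumes "finite V"
    and "\<And>u v. E u v \<Longrightarrow> E v u"
    and "\<And>v. \<not> E v v"
    and "no_induced_2K2 V E"
    and "prime_graph TYPE('k::field) V E"
  shows "real (reg TYPE('k) V E) \<le> (real (min_degree V E) + 3) / 2"
proof -
  let ?r = "reg TYPE('k) V E" and ?\<delta> = "min_degree V E"
  note top = prime_graph_top_homology[OF assms(1,5)]
  have "V \<noteq> {}" using assms(5) unfolding prime_graph_def connected_graph_def by blast
  then obtain x where x: "x \<in> V" "degree V E x = ?\<delta>" using min_degree_attained[OF assms(1)] by blast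
  obtain u where u: "u \<in> V" "E x u"
    using ind_complex_acyclic_if_isolated[of V x E, OF assms(1) x(1) _ assms(2)] top(1) by blast
  define T where "T = V - {u} - {v. E u v}"
  define I where "I = T - {v. E x v}"
  have "red_hom_nonzero TYPE('k) (ind_complex T E) (int ?r - 1 - 1)"
    unfolding T_def using red_hom_nonzero_link[OF assms(1) u(1) assms(2,3) top(1) top(2)[OF u(1)]] .
  moreover have "independent I E"
    using independent_common_non_neighbourhood[OF assms(4,2,3) x(1) u]
    by (rule independent_subset) (auto simp: I_def T_def)
  ultimately have "2 * (int ?r - 1 - 1) \<le> int (card (T - I))"
    using assms(1) by (intro twice_degree_le_card_diff_independent[OF assms(4,2,3)]) (auto simp: T_def)
  moreover have "card (T - I) + 1 \<le> ?\<delta>"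
  proof -
    have "card (T - I) \<le> card ({v \<in> V. E x v} - {u})"
      using assms(1) by (intro card_mono) (auto simp: I_def T_def)
    also have "\<dots> + 1 = ?\<delta>"
      using card_Suc_Diff1[of "{v \<in> V. E x v}" u] u assms(1) x(2) by (simp add: degree_def)
    finally show ?thesis by simp
  qed
  ultimately have "2 * int ?r \<le> int ?\<delta> + 3" by arith
  then have "real_of_int (2 * int ?r) \<le> real_of_int (int ?\<delta> + 3)" by (simp only: of_int_le_iff)
  then show ?thesis by simp
qed

end
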